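(* Let $\{U_N(i)\}_{i=1}^{M_N}$, $N\ge1$, be a triangular array and $\{\mathcal F_N\}$ a filtration as described. Assume there exist nonnegative random variables $V_N,X_N,Y_N$ such that (i) $\max_{i\le M_N}|U_N(i)|\le V_N+X_NY_N^2$ a.s. for all $N$; (ii) $V_N$ and $X_N$ are $\mathcal F_N$-measurable, $V_N\to0$ in probability, and $\lim_{\lambda\to\infty}\sup_N\mathbb P(X_N\ge\lambda)=0$; (iii) for some $\alpha\in\{1,2\}$, $\nu>0$, $c>0$, $C>0$, a.s. for all $y>0$ and $N$, $\mathbb P(Y_N\ge y\mid\mathcal F_N)\le CM_N\exp(-cM_N^{\nu}y^{2\alpha})$. Then for $p\in\{1,2\}$: if $\lim_{\lambda\to\infty}\sup_N\mathbb P\big(\sum_{i=1}^{M_N}\mathbb E[|U_N(i)|^p\mid\mathcal F_N]\ge\lambda\big)=0$, then for every $\varepsilon>0$, $$\sum_{i=1}^{M_N}\mathbb E\big[|U_N(i)|^p\mathbf 1\{|U_N(i)|\ge\varepsilon\}\mid\mathcal F_N\big]\to0\quad\text{in probability as }N\to\infty.$$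
   Context: $(\Omega,\mathcal A,\{\mathcal F_N\}_{N\ge0},\mathbb P)$ is a filtered probability space and $\{M_N\}$ a sequence of positive integers with $M_N\to\infty$. For each $N$, $U_N(1),\dots,U_N(M_N)$ are real random variables that are conditionally independent given $\mathcal F_N$ with $\mathbb E[|U_N(i)|\mid\mathcal F_N]<\infty$ a.s. (and $\mathbb E[U_N(i)^2\mid\mathcal F_N]<\infty$ a.s. when $p=2$). *)

theory Defs
  imports "HOL-Probability.Probability"
begin

text \<open>Conditional expectation of a nonnegative random variable given a sub-sigma-algebra F
  is the library's nn_cond_exp (ennreal-valued, so it is defined for non-integrable variables).\<close>

definition cond_prob :: "'a measure \<Rightarrow> 'a measure \<Rightarrow> 'a set \<Rightarrow> 'a \<Rightarrow> ennreal" where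
  "cond_prob M F A = nn_cond_exp M F (indicator A)"

definition cond_indep_vars ::
  "'a measure \<Rightarrow> 'a measure \<Rightarrow> ('i \<Rightarrow> 'a \<Rightarrow> real) \<Rightarrow> 'i set \<Rightarrow> bool" where
  "cond_indep_vars M F Z I \<longleftrightarrow>
     (\<forall>i\<in>I. Z i \<in> borel_measurable M) \<and>
     (\<forall>J B. finite J \<and> J \<subseteq> I \<and> (\<forall>j\<in>J. B j \<in> sets borel) \<longrightarrow>
        (AE x in M. cond_prob M F {\<omega>\<in>space M. \<forall>j\<in>J. Z j \<omega> \<in> B j} x
                    = (\<Prod>j\<in>J. cond_prob M F {\<omega>\<in>space M. Z j \<omega> \<in> B j} x)))"

definition tendsto_prob_zero :: "'a measure \<Rightarrow> (nat \<Rightarrow> 'a \<Rightarrow> real) \<Rightarrow> bool" where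
  "tendsto_prob_zero M Z \<longleftrightarrow>
     (\<forall>e>0. (\<lambda>N. measure M {x\<in>space M. \<bar>Z N x\<bar> > e}) \<longlonglongrightarrow> 0)"

definition tendsto_prob_zero_enn :: "'a measure \<Rightarrow> (nat \<Rightarrow> 'a \<Rightarrow> ennreal) \<Rightarrow> bool" where
  "tendsto_prob_zero_enn M Z \<longleftrightarrow>
     (\<forall>e>0. (\<lambda>N. measure M {x\<in>space M. Z N x > ennreal e}) \<longlonglongrightarrow> 0)"

end

theory Submission
  imports Defs "HOL-Real_Asymp.Real_Asymp"
begin

text \<open>
  Fix \<epsilon>, \<eta> > 0 and a truncation level L > 0.  Off the "bad" events
  {V_N \<ge> \<epsilon>/2} and {X_N \<ge> L}, whose probabilities are small by hypothesis (ii),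
  an index i with |U_N(i)| \<ge> \<epsilon> forces L Y_N^2 > \<epsilon>/2, and then |U_N(i)|^p is dominated
  by \<epsilon>^p times the layer weight  sum_k 4^(k+1) 1{\<delta>(k+1) \<le> Y_N^2},  \<delta> = \<epsilon>/(2L).
  Because the good event is F_N-measurable, the conditional expectations can be integrated
  out, so the conditional Markov inequality bounds the probability that the truncated sum
  exceeds \<eta> on the good event by  M_N \<epsilon>^p E[layer weight] / \<eta>.  The conditional tail
  bound (iii) gives P(\<delta>(k+1) \<le> Y_N^2) \<le> C M_N r^(k+1) with r = exp(-c M_N^\<nu> \<delta>^\<alpha>), and a
  geometric series yields E[layer weight] \<le> 8 C M_N r.  Since M_N^2 r \<rightarrow> 0 for every fixed L,
  letting first N \<rightarrow> \<infinity> and then L \<rightarrow> \<infinity> proves convergence in probability.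
  Conditional independence is used only for the measurability of the U_N(i).
\<close>

definition layer_weight :: "real \<Rightarrow> real \<Rightarrow> ennreal" where
  "layer_weight \<delta> t = (\<Sum>k. ennreal (4 ^ Suc k) * indicator {\<delta> * real (Suc k)..} t)"

lemma borel_measurable_layer_weight[measurable]: "layer_weight \<delta> \<in> borel_measurable borel"
  unfolding layer_weight_def by measurable

text \<open>Exponential growth beats the square; this fixes the base 4 in the layer weight.\<close>

lemma square_Suc_le_four_pow:
  fixes n :: nat
  assumes "n \<ge> 1"
  shows "(real n + 1)\<^sup>2 \<le> 4 ^ n"
  using assms
proof (induction n rule: dec_induct)
  case base
  then show ?case by simp
next
  case (step n)
  have "(real (Suc n) + 1)\<^sup>2 \<le> 4 * (real n + 1)\<^sup>2"
    using step(1) by (simp add: power2_eq_square algebra_simps)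
  also have "\<dots> \<le> 4 * 4 ^ n" using step.IH by simp
  finally show ?case by simp
qed

lemma ennreal_term_le_suminf: "(f i :: ennreal) \<le> (\<Sum>k. f k)"
  using sum_le_suminf[OF summableI, of "{i}" f] by simp

lemma pow_le_layer_weight:
  fixes \<delta> t :: real and p :: nat
  assumes \<delta>: "\<delta> > 0" and t: "\<delta> \<le> t" and p: "p \<le> 2"
  shows "ennreal ((t / \<delta>) ^ p) \<le> layer_weight \<delta> t"
proof -
  define w where "w = t / \<delta>"
  define n where "n = nat \<lfloor>w\<rfloor>"
  have w1: "w \<ge> 1" using \<delta> t by (simp add: w_def)
  then have n1: "n \<ge> 1" and nw: "real n \<le> w" "w < real n + 1"
    unfolding n_def by linarith+
  have "w ^ p \<le> (real n + 1) ^ p" using nw w1 by (intro power_mono) auto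
  also have "\<dots> \<le> (real n + 1)\<^sup>2" using p by (intro power_increasing) auto
  also have "\<dots> \<le> 4 ^ n" using n1 by (rule square_Suc_le_four_pow)
  finally have wn: "w ^ p \<le> 4 ^ n" .
  have "\<delta> * real (Suc (n - 1)) \<le> t"
    using n1 nw \<delta> by (simp add: w_def field_simps)
  then have "ennreal (4 ^ n) = ennreal (4 ^ Suc (n - 1)) * indicator {\<delta> * real (Suc (n - 1))..} t"
    using n1 by simp
  also have "\<dots> \<le> layer_weight \<delta> t"
    unfolding layer_weight_def by (rule ennreal_term_le_suminf)
  finally show ?thesis using wn unfolding w_def by (meson ennreal_leI order_trans)
qed

lemma truncated_pow_le_layer_weight:
  fixes u v x t \<epsilon> L :: real and p :: nat
  assumes \<epsilon>: "\<epsilon> > 0" and L: "L > 0" and p: "p \<le> 2"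
    and u_large: "\<bar>u\<bar> \<ge> \<epsilon>" and u_bound: "\<bar>u\<bar> \<le> v + x * t"
    and v: "v < \<epsilon> / 2" and x: "x < L" and t: "t \<ge> 0"
  shows "ennreal (\<bar>u\<bar> ^ p) \<le> ennreal (\<epsilon> ^ p) * layer_weight (\<epsilon> / (2 * L)) t"
proof -
  define \<delta> where "\<delta> = \<epsilon> / (2 * L)"
  have \<delta>: "\<delta> > 0" using \<epsilon> L by (simp add: \<delta>_def)
  have "x * t \<le> L * t" using x t by (intro mult_right_mono) auto
  then have u_lt: "\<bar>u\<bar> < \<epsilon> / 2 + L * t" using u_bound v by linarith
  then have "\<epsilon> / 2 < L * t" using u_large by linarith
  then have t_large: "\<delta> \<le> t" using L by (simp add: \<delta>_def field_simps)
  have "\<bar>u\<bar> \<le> \<epsilon> * (t / \<delta>)"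
    using u_lt \<open>\<epsilon> / 2 < L * t\<close> \<epsilon> L by (simp add: \<delta>_def field_simps)
  then have "\<bar>u\<bar> ^ p \<le> (\<epsilon> * (t / \<delta>)) ^ p" by (intro power_mono) auto
  also have "\<dots> = \<epsilon> ^ p * (t / \<delta>) ^ p" by (rule power_mult_distrib)
  finally have "ennreal (\<bar>u\<bar> ^ p) \<le> ennreal (\<epsilon> ^ p) * ennreal ((t / \<delta>) ^ p)"
    using \<epsilon> \<delta> t by (simp add: ennreal_mult[symmetric] ennreal_leI)
  also have "\<dots> \<le> ennreal (\<epsilon> ^ p) * layer_weight \<delta> t"
    using pow_le_layer_weight[OF \<delta> t_large p] by (rule mult_left_mono) simp
  finally show ?thesis unfolding \<delta>_def .
qed

lemma geometric_layer_sum_le: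
  fixes K q :: real and e :: "nat \<Rightarrow> ennreal"
  assumes K: "K \<ge> 0" and q: "0 \<le> q" "q \<le> 1 / 8"
    and e: "\<And>k. e k \<le> ennreal (K * q ^ Suc k)"
  shows "(\<Sum>k. ennreal (4 ^ Suc k) * e k) \<le> ennreal (8 * K * q)"
proof -
  have geom: "summable (\<lambda>k. (4 * q) ^ k)" using q by (intro summable_geometric) auto
  have summ: "summable (\<lambda>k. K * (4 * q) ^ Suc k)"
    using summable_mult[OF geom, of "K * (4 * q)"] by (simp add: algebra_simps)
  have "(\<Sum>k. ennreal (4 ^ Suc k) * e k) \<le> (\<Sum>k. ennreal (K * (4 * q) ^ Suc k))"
  proof (intro suminf_le summableI)
    fix k
    have "ennreal (4 ^ Suc k) * e k \<le> ennreal (4 ^ Suc k) * ennreal (K * q ^ Suc k)"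
      using e by (rule mult_left_mono) simp
    also have "\<dots> = ennreal (K * (4 * q) ^ Suc k)"
      using K q by (simp add: ennreal_mult'' power_mult_distrib mult_ac)
    finally show "ennreal (4 ^ Suc k) * e k \<le> ennreal (K * (4 * q) ^ Suc k)" .
  qed
  also have "\<dots> = ennreal (\<Sum>k. K * (4 * q) ^ Suc k)"
    using K q summ by (intro suminf_ennreal2) auto
  also have "(\<Sum>k. K * (4 * q) ^ Suc k) = K * (4 * q) / (1 - 4 * q)"
    using suminf_mult[OF geom, of "K * (4 * q)"] suminf_geometric[of "4 * q"] q
    by (simp add: algebra_simps)
  also have "\<dots> \<le> 8 * K * q"
    using K q by (simp add: field_simps mult_left_mono)
  finally show ?thesis by (simp add: ennreal_leI)
qed

text \<open>A stretched exponential tail for Y makes the layer probabilities of Y^2 decay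
  geometrically; \<alpha> \<ge> 1 is used to compare (k+1)^\<alpha> with k+1.\<close>

lemma layer_tail_le_pow:
  fixes P :: "'a measure" and Y :: "'a \<Rightarrow> real" and K a \<delta> :: real and \<alpha> :: nat
  assumes Y_nonneg: "\<And>x. x \<in> space P \<Longrightarrow> Y x \<ge> 0"
    and tail: "\<And>y. y > 0 \<Longrightarrow> emeasure P {x\<in>space P. Y x \<ge> y} \<le> ennreal (K * exp (- a * y ^ (2 * \<alpha>)))"
    and K: "K \<ge> 0" and a: "a \<ge> 0" and \<delta>: "\<delta> > 0" and \<alpha>: "\<alpha> \<ge> 1"
  shows "emeasure P {x\<in>space P. \<delta> * real (Suc k) \<le> (Y x)\<^sup>2} \<le> ennreal (K * exp (- a * \<delta> ^ \<alpha>) ^ Suc k)"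
proof -
  define y where "y = sqrt (\<delta> * real (Suc k))"
  have y: "y > 0" and y_sq: "y\<^sup>2 = \<delta> * real (Suc k)" using \<delta> by (simp_all add: y_def)
  have "{x\<in>space P. \<delta> * real (Suc k) \<le> (Y x)\<^sup>2} = {x\<in>space P. Y x \<ge> y}"
    using Y_nonneg y unfolding y_sq[symmetric] by (auto intro: power_mono power2_le_imp_le)
  then have "emeasure P {x\<in>space P. \<delta> * real (Suc k) \<le> (Y x)\<^sup>2} \<le> ennreal (K * exp (- a * y ^ (2 * \<alpha>)))"
    using tail[OF y] by simp
  also have "\<dots> \<le> ennreal (K * exp (- a * \<delta> ^ \<alpha>) ^ Suc k)"
  proof (intro ennreal_leI mult_left_mono K)
    have "(real (Suc k)) ^ 1 \<le> real (Suc k) ^ \<alpha>" using \<alpha> by (intro power_increasing) auto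
    then have "\<delta> ^ \<alpha> * real (Suc k) \<le> \<delta> ^ \<alpha> * real (Suc k) ^ \<alpha>" using \<delta> by (intro mult_left_mono) auto
    also have "\<dots> = y ^ (2 * \<alpha>)" by (simp add: power_mult y_sq power_mult_distrib)
    finally have "a * (\<delta> ^ \<alpha> * real (Suc k)) \<le> a * y ^ (2 * \<alpha>)" using a by (rule mult_left_mono)
    moreover have "exp (- a * \<delta> ^ \<alpha>) ^ Suc k = exp (- (a * (\<delta> ^ \<alpha> * real (Suc k))))"
      using exp_of_nat_mult[of "Suc k" "- a * \<delta> ^ \<alpha>"] by (simp add: mult_ac)
    ultimately show "exp (- a * y ^ (2 * \<alpha>)) \<le> exp (- a * \<delta> ^ \<alpha>) ^ Suc k"
      by simp
  qed
  finally show ?thesis .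
qed

lemma nn_integral_layer_weight:
  fixes P :: "'a measure" and Z :: "'a \<Rightarrow> real"
  assumes [measurable]: "Z \<in> borel_measurable P"
  shows "(\<integral>\<^sup>+x. layer_weight \<delta> (Z x) \<partial>P)
           = (\<Sum>k. ennreal (4 ^ Suc k) * emeasure P {x\<in>space P. \<delta> * real (Suc k) \<le> Z x})"
proof -
  have "(\<integral>\<^sup>+x. layer_weight \<delta> (Z x) \<partial>P)
          = (\<Sum>k. \<integral>\<^sup>+x. ennreal (4 ^ Suc k) * indicator {x\<in>space P. \<delta> * real (Suc k) \<le> Z x} x \<partial>P)"
    unfolding layer_weight_def
    by (subst nn_integral_suminf[symmetric]) (auto intro!: nn_integral_cong simp: indicator_def)
  then show ?thesis by (simp add: nn_integral_cmult_indicator)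
qed

lemma sigma_finite_subalgebra_of_prob_space:
  assumes "prob_space P" and "subalgebra P F"
  shows "sigma_finite_subalgebra P F"
proof -
  interpret prob_space P by fact
  show ?thesis
    using assms(2) by (intro finite_measure_subalgebra_is_sigma_finite finite_measure_subalgebra.intro
        finite_measure_axioms finite_measure_subalgebra_axioms.intro)
qed

text \<open>An almost sure bound on a conditional probability bounds the unconditional probability,
  since the latter is the expectation of the former.\<close>

lemma emeasure_le_of_cond_prob_le:
  assumes prob: "prob_space P" and sub: "subalgebra P F" and A: "A \<in> sets P"
    and bound: "AE x in P. cond_prob P F A x \<le> b"
  shows "emeasure P A \<le> b"
proof -
  interpret prob_space P by fact
  interpret sigma_finite_subalgebra P F
    using sigma_finite_subalgebra_of_prob_space[OF prob sub] .
  have "emeasure P A = (\<integral>\<^sup>+x. 1 * indicator A x \<partial>P)" using A by simp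
  also have "\<dots> = (\<integral>\<^sup>+x. 1 * cond_prob P F A x \<partial>P)"
    unfolding cond_prob_def using A by (intro nn_cond_exp_intg[symmetric]) auto
  also have "\<dots> \<le> (\<integral>\<^sup>+x. b \<partial>P)" using bound by (intro nn_integral_mono_AE) auto
  also have "\<dots> = b" by (simp add: emeasure_space_1)
  finally show ?thesis .
qed

lemma nn_integral_layer_weight_le:
  fixes P F :: "'a measure" and Y :: "'a \<Rightarrow> real" and K a \<delta> :: real and \<alpha> :: nat
  assumes prob: "prob_space P" and sub: "subalgebra P F"
    and Y_meas[measurable]: "Y \<in> borel_measurable P"
    and Y_nonneg: "\<And>x. x \<in> space P \<Longrightarrow> Y x \<ge> 0"
    and tail: "\<And>y. y > 0 \<Longrightarrow>
        AE x in P. cond_prob P F {\<omega>\<in>space P. Y \<omega> \<ge> y} x \<le> ennreal (K * exp (- a * y ^ (2 * \<alpha>)))"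
    and K: "K \<ge> 0" and a: "a \<ge> 0" and \<delta>: "\<delta> > 0" and \<alpha>: "\<alpha> \<ge> 1"
    and small: "exp (- a * \<delta> ^ \<alpha>) \<le> 1 / 8"
  shows "(\<integral>\<^sup>+x. layer_weight \<delta> ((Y x)\<^sup>2) \<partial>P) \<le> ennreal (8 * K * exp (- a * \<delta> ^ \<alpha>))"
proof -
  have tail_P: "emeasure P {x\<in>space P. Y x \<ge> y} \<le> ennreal (K * exp (- a * y ^ (2 * \<alpha>)))"
    if "y > 0" for y
    using emeasure_le_of_cond_prob_le[OF prob sub _ tail[OF that]] by simp
  have "emeasure P {x\<in>space P. \<delta> * real (Suc k) \<le> (Y x)\<^sup>2} \<le> ennreal (K * exp (- a * \<delta> ^ \<alpha>) ^ Suc k)"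
    for k by (rule layer_tail_le_pow[OF Y_nonneg tail_P K a \<delta> \<alpha>])
  then show ?thesis
    unfolding nn_integral_layer_weight[OF borel_measurable_power[OF Y_meas]]
    using K small by (intro geometric_layer_sum_le) auto
qed

lemma cond_exp_sum_Markov:
  fixes P F :: "'a measure" and f :: "'i \<Rightarrow> 'a \<Rightarrow> ennreal" and g :: "'a \<Rightarrow> ennreal"
  assumes prob: "prob_space P" and sub: "subalgebra P F" and G: "G \<in> sets F" and I: "finite I"
    and f_meas: "\<And>i. i \<in> I \<Longrightarrow> f i \<in> borel_measurable P"
    and dom: "\<And>i. i \<in> I \<Longrightarrow> AE x in P. indicator G x * f i x \<le> g x"
    and \<eta>: "\<eta> > 0"
  shows "emeasure P {x\<in>G. ennreal \<eta> < (\<Sum>i\<in>I. nn_cond_exp P F (f i) x)}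
           \<le> ennreal (1 / \<eta>) * (of_nat (card I) * (\<integral>\<^sup>+x. g x \<partial>P))"
proof -
  interpret sigma_finite_subalgebra P F
    using sigma_finite_subalgebra_of_prob_space[OF prob sub] .
  define S where "S x = (\<Sum>i\<in>I. nn_cond_exp P F (f i) x)" for x
  have G_P[measurable]: "G \<in> sets P" using G sub by (auto simp: subalgebra_def)
  have G_F[measurable]: "indicator G \<in> borel_measurable F" using G by simp
  have "(\<integral>\<^sup>+x. S x * indicator G x \<partial>P) = (\<Sum>i\<in>I. \<integral>\<^sup>+x. indicator G x * nn_cond_exp P F (f i) x \<partial>P)"
    unfolding S_def sum_distrib_right by (subst nn_integral_sum) (auto simp: mult.commute)
  also have "\<dots> = (\<Sum>i\<in>I. \<integral>\<^sup>+x. indicator G x * f i x \<partial>P)"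
    using f_meas by (intro sum.cong refl nn_cond_exp_intg G_F)
  also have "\<dots> \<le> (\<Sum>i\<in>I. \<integral>\<^sup>+x. g x \<partial>P)"
    using dom by (intro sum_mono nn_integral_mono_AE)
  also have "\<dots> = of_nat (card I) * (\<integral>\<^sup>+x. g x \<partial>P)" by simp
  finally have int_S: "(\<integral>\<^sup>+x. S x * indicator G x \<partial>P) \<le> of_nat (card I) * (\<integral>\<^sup>+x. g x \<partial>P)" .
  have "{x\<in>G. ennreal \<eta> < S x} \<subseteq> {x\<in>G. 1 \<le> ennreal (1 / \<eta>) * S x}"
  proof safe
    fix x assume "ennreal \<eta> < S x"
    have "1 = ennreal (1 / \<eta>) * ennreal \<eta>" using \<eta> by (simp add: ennreal_mult[symmetric])
    also have "\<dots> \<le> ennreal (1 / \<eta>) * S x" using \<open>ennreal \<eta> < S x\<close> by (intro mult_left_mono) auto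
    finally show "1 \<le> ennreal (1 / \<eta>) * S x" .
  qed
  then have "emeasure P {x\<in>G. ennreal \<eta> < S x} \<le> emeasure P {x\<in>G. 1 \<le> ennreal (1 / \<eta>) * S x}"
    by (intro emeasure_mono) (auto simp: S_def)
  also have "\<dots> \<le> ennreal (1 / \<eta>) * (\<integral>\<^sup>+x. S x * indicator G x \<partial>P)"
    by (intro nn_integral_Markov_inequality) (auto simp: S_def)
  also have "\<dots> \<le> ennreal (1 / \<eta>) * (of_nat (card I) * (\<integral>\<^sup>+x. g x \<partial>P))"
    using int_S by (rule mult_left_mono) simp
  finally show ?thesis unfolding S_def .
qed

lemma truncated_cond_sum_prob_bound:
  fixes P F :: "'a measure" and I :: "'i set" and U :: "'i \<Rightarrow> 'a \<Rightarrow> real"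
    and V X Y :: "'a \<Rightarrow> real" and \<alpha> p :: nat and K a \<epsilon> L \<eta> :: real
  defines "r \<equiv> exp (- a * (\<epsilon> / (2 * L)) ^ \<alpha>)"
  assumes prob: "prob_space P" and sub: "subalgebra P F" and I: "finite I"
    and U_meas: "\<And>i. i \<in> I \<Longrightarrow> U i \<in> borel_measurable P"
    and V_meas[measurable]: "V \<in> borel_measurable F"
    and X_meas[measurable]: "X \<in> borel_measurable F"
    and Y_meas[measurable]: "Y \<in> borel_measurable P"
    and Y_nonneg: "\<And>x. x \<in> space P \<Longrightarrow> Y x \<ge> 0"
    and bound: "AE x in P. Max ((\<lambda>i. \<bar>U i x\<bar>) ` I) \<le> V x + X x * (Y x)\<^sup>2"
    and tail: "\<And>y. y > 0 \<Longrightarrow>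
        AE x in P. cond_prob P F {\<omega>\<in>space P. Y \<omega> \<ge> y} x \<le> ennreal (K * exp (- a * y ^ (2 * \<alpha>)))"
    and \<alpha>: "\<alpha> \<ge> 1" and p: "p \<le> 2" and K: "K \<ge> 0" and a: "a \<ge> 0"
    and \<epsilon>: "\<epsilon> > 0" and L: "L > 0" and \<eta>: "\<eta> > 0" and small: "r \<le> 1 / 8"
  shows "measure P {x\<in>space P. (\<Sum>i\<in>I. nn_cond_exp P F
              (\<lambda>\<omega>. ennreal (\<bar>U i \<omega>\<bar> ^ p * indicator {\<omega>'. \<bar>U i \<omega>'\<bar> \<ge> \<epsilon>} \<omega>)) x) > ennreal \<eta>}
     \<le> measure P {x\<in>space P. V x \<ge> \<epsilon> / 2} + measure P {x\<in>space P. X x \<ge> L}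
        + 8 * K * real (card I) * \<epsilon> ^ p * r / \<eta>"
proof -
  interpret prob_space P by fact
  have [measurable]: "V \<in> borel_measurable P" "X \<in> borel_measurable P"
    using measurable_from_subalg[OF sub V_meas] measurable_from_subalg[OF sub X_meas] by auto
  define \<delta> where "\<delta> = \<epsilon> / (2 * L)"
  have \<delta>: "\<delta> > 0" using \<epsilon> L by (simp add: \<delta>_def)
  define f where "f i \<omega> = ennreal (\<bar>U i \<omega>\<bar> ^ p * indicator {\<omega>'. \<bar>U i \<omega>'\<bar> \<ge> \<epsilon>} \<omega>)" for i \<omega>
  have f_meas: "f i \<in> borel_measurable P" if "i \<in> I" for i
    using U_meas[OF that] unfolding f_def by (auto simp: indicator_def)
  define S where "S x = (\<Sum>i\<in>I. nn_cond_exp P F (f i) x)" for x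
  define G where "G = {x\<in>space P. V x < \<epsilon> / 2 \<and> X x < L}"
  have G: "G \<in> sets F"
  proof -
    have "G = {x\<in>space F. V x < \<epsilon> / 2 \<and> X x < L}"
      using sub by (simp add: G_def subalgebra_def)
    also have "\<dots> \<in> sets F" by measurable
    finally show ?thesis .
  qed
  have dom: "AE x in P. indicator G x * f i x \<le> ennreal (\<epsilon> ^ p) * layer_weight \<delta> ((Y x)\<^sup>2)"
    if i: "i \<in> I" for i
    using bound
  proof eventually_elim
    case (elim x)
    show ?case
    proof (cases "x \<in> G \<and> \<bar>U i x\<bar> \<ge> \<epsilon>")
      case True
      have "\<bar>U i x\<bar> \<le> Max ((\<lambda>i. \<bar>U i x\<bar>) ` I)" using I i by (intro Max_ge) auto
      then have "ennreal (\<bar>U i x\<bar> ^ p) \<le> ennreal (\<epsilon> ^ p) * layer_weight \<delta> ((Y x)\<^sup>2)"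
        using True elim unfolding \<delta>_def G_def
        by (intro truncated_pow_le_layer_weight[OF \<epsilon> L p]) auto
      then show ?thesis using True by (simp add: f_def)
    qed (auto simp: f_def)
  qed
  have int_layer: "(\<integral>\<^sup>+x. layer_weight \<delta> ((Y x)\<^sup>2) \<partial>P) \<le> ennreal (8 * K * r)"
    using nn_integral_layer_weight_le[OF prob sub Y_meas Y_nonneg tail K a \<delta> \<alpha>] small
    by (simp add: r_def \<delta>_def)
  have "emeasure P {x\<in>G. ennreal \<eta> < S x}
          \<le> ennreal (1 / \<eta>) * (of_nat (card I) * (\<integral>\<^sup>+x. ennreal (\<epsilon> ^ p) * layer_weight \<delta> ((Y x)\<^sup>2) \<partial>P))"
    unfolding S_def using prob sub G I f_meas dom \<eta> by (rule cond_exp_sum_Markov)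
  also have "\<dots> \<le> ennreal (1 / \<eta>) * (of_nat (card I) * (ennreal (\<epsilon> ^ p) * ennreal (8 * K * r)))"
    using int_layer by (simp add: nn_integral_cmult mult_left_mono)
  also have "\<dots> = ennreal (8 * K * real (card I) * \<epsilon> ^ p * r / \<eta>)"
    using K \<epsilon> \<eta> by (simp add: ennreal_mult[symmetric] ennreal_of_nat_eq_real_of_nat r_def mult_ac)
  finally have bad_G: "measure P {x\<in>G. ennreal \<eta> < S x} \<le> 8 * K * real (card I) * \<epsilon> ^ p * r / \<eta>"
    using K \<epsilon> \<eta> by (simp add: emeasure_eq_measure r_def ennreal_le_iff)
  have [measurable]: "G \<in> sets P" using G sub by (auto simp: subalgebra_def)
  have [measurable]: "S \<in> borel_measurable P" unfolding S_def by measurable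
  have "measure P {x\<in>space P. S x > ennreal \<eta>}
          \<le> measure P ({x\<in>G. ennreal \<eta> < S x} \<union> ({x\<in>space P. V x \<ge> \<epsilon> / 2} \<union> {x\<in>space P. X x \<ge> L}))"
    by (intro finite_measure_mono) (auto simp: G_def)
  also have "\<dots> \<le> measure P {x\<in>G. ennreal \<eta> < S x}
                   + (measure P {x\<in>space P. V x \<ge> \<epsilon> / 2} + measure P {x\<in>space P. X x \<ge> L})"
    by (intro order_trans[OF measure_Un_le] add_left_mono measure_Un_le) auto
  finally show ?thesis using bad_G unfolding S_def f_def by linarith
qed

lemma tendsto_zero_by_tight_splitting:
  fixes s v :: "nat \<Rightarrow> real" and x g :: "real \<Rightarrow> nat \<Rightarrow> real"
  assumes s_nonneg: "\<And>N. s N \<ge> 0"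
    and v: "v \<longlonglongrightarrow> 0"
    and x_tight: "((\<lambda>L. SUP N. x L N) \<longlongrightarrow> 0) at_top"
    and x_bdd: "\<And>L. bdd_above (range (x L))"
    and g: "\<And>L. L > 0 \<Longrightarrow> g L \<longlonglongrightarrow> 0"
    and split: "\<And>L. L > 0 \<Longrightarrow> eventually (\<lambda>N. s N \<le> v N + x L N + g L N) sequentially"
  shows "s \<longlonglongrightarrow> 0"
proof (rule order_tendstoI)
  fix \<gamma> :: real assume \<gamma>: "\<gamma> > 0"
  have "\<forall>\<^sub>F L in at_top. (SUP N. x L N) < \<gamma> / 3 \<and> L > 0"
    using order_tendstoD(2)[OF x_tight, of "\<gamma> / 3"] \<gamma> by (intro eventually_conj eventually_gt_at_top) auto
  then obtain L where L: "L > 0" and x_small: "(SUP N. x L N) < \<gamma> / 3"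
    by (auto simp: eventually_at_top_linorder)
  have x_L: "x L N < \<gamma> / 3" for N
    using cSUP_upper[OF UNIV_I x_bdd[of L], of N] x_small by linarith
  have ev: "\<forall>\<^sub>F N in sequentially. v N < \<gamma> / 3 \<and> g L N < \<gamma> / 3 \<and> s N \<le> v N + x L N + g L N"
    using order_tendstoD(2)[OF v, of "\<gamma> / 3"] order_tendstoD(2)[OF g[OF L], of "\<gamma> / 3"] split[OF L] \<gamma>
    by (intro eventually_conj) auto
  then show "\<forall>\<^sub>F N in sequentially. s N < \<gamma>"
  proof eventually_elim
    case (elim N)
    then show ?case using x_L[of N] by linarith
  qed
next
  fix \<gamma> :: real assume "\<gamma> < 0"
  then show "\<forall>\<^sub>F N in sequentially. \<gamma> < s N"
    using s_nonneg by (intro always_eventually allI) (rule less_le_trans)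
qed

lemma tendsto_prob_zero_measure_ge:
  assumes "prob_space P" and "tendsto_prob_zero P V" and "\<And>N. V N \<in> borel_measurable P" and "e > 0"
  shows "(\<lambda>N. measure P {x\<in>space P. V N x \<ge> e}) \<longlonglongrightarrow> 0"
proof (rule tendsto_sandwich[OF always_eventually always_eventually tendsto_const])
  interpret prob_space P by fact
  show "(\<lambda>N. measure P {x\<in>space P. \<bar>V N x\<bar> > e / 2}) \<longlonglongrightarrow> 0"
    using assms(2) half_gt_zero[OF assms(4)] unfolding tendsto_prob_zero_def by blast
  show "\<forall>N. measure P {x\<in>space P. V N x \<ge> e} \<le> measure P {x\<in>space P. \<bar>V N x\<bar> > e / 2}"
    using assms(3,4) by (auto intro!: finite_measure_mono)
qed simp

lemma superpolynomial_decay: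
  fixes M :: "nat \<Rightarrow> nat" and a \<nu> :: real
  assumes M: "filterlim M at_top sequentially" and \<nu>: "\<nu> > 0" and a: "a > 0"
  shows "(\<lambda>N. exp (- a * real (M N) powr \<nu>)) \<longlonglongrightarrow> 0"
    and "(\<lambda>N. (real (M N))\<^sup>2 * exp (- a * real (M N) powr \<nu>)) \<longlonglongrightarrow> 0"
proof -
  have M_real: "filterlim (\<lambda>N. real (M N)) at_top sequentially"
    using filterlim_compose[OF filterlim_real_sequentially M] by (simp add: o_def)
  have "((\<lambda>m::real. exp (- a * m powr \<nu>)) \<longlongrightarrow> 0) at_top"
    and "((\<lambda>m::real. m\<^sup>2 * exp (- a * m powr \<nu>)) \<longlongrightarrow> 0) at_top"
    using \<nu> a by real_asymp+
  from this[THEN filterlim_compose, OF M_real]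
  show "(\<lambda>N. exp (- a * real (M N) powr \<nu>)) \<longlonglongrightarrow> 0"
    and "(\<lambda>N. (real (M N))\<^sup>2 * exp (- a * real (M N) powr \<nu>)) \<longlonglongrightarrow> 0" .
qed

theorem mainTheorem16:
  fixes P :: "'a measure"
    and F :: "nat \<Rightarrow> 'a measure"
    and Msz :: "nat \<Rightarrow> nat"
    and U :: "nat \<Rightarrow> nat \<Rightarrow> 'a \<Rightarrow> real"
    and V X Y :: "nat \<Rightarrow> 'a \<Rightarrow> real"
    and \<alpha> p :: nat
    and \<nu> c C :: real
  assumes prob: "prob_space P"
    and subalg: "\<And>N. subalgebra P (F N)"
    and filtration: "\<And>N. sets (F N) \<subseteq> sets (F (Suc N))"
    and Msz_pos: "\<And>N. Msz N > 0"
    and Msz_lim: "filterlim Msz at_top at_top"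
    and U_indep: "\<And>N. cond_indep_vars P (F N) (U N) {1..Msz N}"
    and U_int: "\<And>N i. i \<in> {1..Msz N} \<Longrightarrow>
                  AE x in P. nn_cond_exp P (F N) (\<lambda>\<omega>. ennreal \<bar>U N i \<omega>\<bar>) x < \<infinity>"
    and U_sq_int: "p = 2 \<Longrightarrow> (\<And>N i. i \<in> {1..Msz N} \<Longrightarrow>
                  AE x in P. nn_cond_exp P (F N) (\<lambda>\<omega>. ennreal ((U N i \<omega>)\<^sup>2)) x < \<infinity>)"
    and V_meas: "\<And>N. V N \<in> borel_measurable (F N)"
    and X_meas: "\<And>N. X N \<in> borel_measurable (F N)"
    and Y_meas: "\<And>N. Y N \<in> borel_measurable P"
    and V_nonneg: "\<And>N x. x \<in> space P \<Longrightarrow> V N x \<ge> 0"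
    and X_nonneg: "\<And>N x. x \<in> space P \<Longrightarrow> X N x \<ge> 0"
    and Y_nonneg: "\<And>N x. x \<in> space P \<Longrightarrow> Y N x \<ge> 0"
    and bound: "\<And>N. AE x in P. Max ((\<lambda>i. \<bar>U N i x\<bar>) ` {1..Msz N}) \<le> V N x + X N x * (Y N x)\<^sup>2"
    and V_lim: "tendsto_prob_zero P V"
    and X_tight: "((\<lambda>t. SUP N. measure P {x\<in>space P. X N x \<ge> t}) \<longlongrightarrow> 0) at_top"
    and alpha: "\<alpha> \<in> {1, 2}"
    and nu: "\<nu> > 0" and c: "c > 0" and Cpos: "C > 0"
    and Y_tail: "\<And>N y. y > 0 \<Longrightarrow>
        AE x in P. cond_prob P (F N) {\<omega>\<in>space P. Y N \<omega> \<ge> y} x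
           \<le> ennreal (C * real (Msz N) * exp (- c * real (Msz N) powr \<nu> * y ^ (2 * \<alpha>)))"
    and p: "p \<in> {1, 2}"
    and sum_tight: "((\<lambda>t. SUP N. measure P {x\<in>space P.
          (\<Sum>i\<in>{1..Msz N}. nn_cond_exp P (F N) (\<lambda>\<omega>. ennreal (\<bar>U N i \<omega>\<bar> ^ p)) x) \<ge> ennreal t})
          \<longlongrightarrow> 0) at_top"
  shows "\<forall>\<epsilon>>0. tendsto_prob_zero_enn P (\<lambda>N x.
           \<Sum>i\<in>{1..Msz N}. nn_cond_exp P (F N)
              (\<lambda>\<omega>. ennreal (\<bar>U N i \<omega>\<bar> ^ p * indicator {\<omega>'. \<bar>U N i \<omega>'\<bar> \<ge> \<epsilon>} \<omega>)) x)"
proof (intro allI impI)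
  fix \<epsilon> :: real assume \<epsilon>: "\<epsilon> > 0"
  interpret prob_space P by (rule prob)
  let ?S = "\<lambda>N x. \<Sum>i\<in>{1..Msz N}. nn_cond_exp P (F N)
              (\<lambda>\<omega>. ennreal (\<bar>U N i \<omega>\<bar> ^ p * indicator {\<omega>'. \<bar>U N i \<omega>'\<bar> \<ge> \<epsilon>} \<omega>)) x"
  define rate where "rate L = c * (\<epsilon> / (2 * L)) ^ \<alpha>" for L
  have rate: "rate L > 0" if "L > 0" for L using c \<epsilon> that by (simp add: rate_def)
  have \<alpha>: "\<alpha> \<ge> 1" and p_le: "p \<le> 2" using alpha p by auto
  have "(\<lambda>N. measure P {x\<in>space P. ?S N x > ennreal \<eta>}) \<longlonglongrightarrow> 0" if \<eta>: "\<eta> > 0" for \<eta>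
  proof (rule tendsto_zero_by_tight_splitting[where
        v = "\<lambda>N. measure P {x\<in>space P. V N x \<ge> \<epsilon> / 2}" and
        x = "\<lambda>L N. measure P {x\<in>space P. X N x \<ge> L}" and
        g = "\<lambda>L N. 8 * C * \<epsilon> ^ p / \<eta> * ((real (Msz N))\<^sup>2 * exp (- rate L * real (Msz N) powr \<nu>))"])
    show "(\<lambda>N. measure P {x\<in>space P. V N x \<ge> \<epsilon> / 2}) \<longlonglongrightarrow> 0"
      using \<epsilon> measurable_from_subalg[OF subalg V_meas] by (intro tendsto_prob_zero_measure_ge[OF prob V_lim]) auto
    fix L :: real assume L: "L > 0"
    show "(\<lambda>N. 8 * C * \<epsilon> ^ p / \<eta> * ((real (Msz N))\<^sup>2 * exp (- rate L * real (Msz N) powr \<nu>))) \<longlonglongrightarrow> 0"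
      using superpolynomial_decay(2)[OF Msz_lim nu rate[OF L]] by (rule tendsto_mult_right_zero)
    have "\<forall>\<^sub>F N in sequentially. exp (- rate L * real (Msz N) powr \<nu>) < 1 / 8"
      using superpolynomial_decay(1)[OF Msz_lim nu rate[OF L]] by (rule order_tendstoD(2)) simp
    then show "\<forall>\<^sub>F N in sequentially. measure P {x\<in>space P. ?S N x > ennreal \<eta>}
        \<le> measure P {x\<in>space P. V N x \<ge> \<epsilon> / 2} + measure P {x\<in>space P. X N x \<ge> L}
          + 8 * C * \<epsilon> ^ p / \<eta> * ((real (Msz N))\<^sup>2 * exp (- rate L * real (Msz N) powr \<nu>))"
    proof eventually_elim
      case (elim N)
      have exp_eq: "exp (- (c * real (Msz N) powr \<nu>) * (\<epsilon> / (2 * L)) ^ \<alpha>) = exp (- rate L * real (Msz N) powr \<nu>)"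
        by (simp add: rate_def mult_ac)
      have U_meas: "U N i \<in> borel_measurable P" if "i \<in> {1..Msz N}" for i
        using U_indep[of N] that by (simp add: cond_indep_vars_def)
      have tail: "AE x in P. cond_prob P (F N) {\<omega>\<in>space P. Y N \<omega> \<ge> y} x
          \<le> ennreal (C * real (Msz N) * exp (- (c * real (Msz N) powr \<nu>) * y ^ (2 * \<alpha>)))" if "y > 0" for y
        using Y_tail[OF that] by simp
      from truncated_cond_sum_prob_bound[OF prob subalg finite_atLeastAtMost U_meas V_meas X_meas Y_meas Y_nonneg
          bound tail \<alpha> p_le _ _ \<epsilon> L \<eta>, unfolded exp_eq] elim Cpos c
      show ?case by (simp add: power2_eq_square mult_ac)
    qed
  qed (auto intro: bdd_aboveI[where M = 1] X_tight)
  then show "tendsto_prob_zero_enn P ?S" unfolding tendsto_prob_zero_enn_def by blast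
qed

end
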